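(* Let $G$ be a countable discrete group, $C$ a subgroup, $\lambda$ a one-dimensional representation of $C$, and $\rho$ a $*$-representation of $C^*(G)$ such that $\rho(c) = \lambda(c)1$ for all $c\in C$. Then $\ker \Lambda_{\tilde\lambda} \cap \mathbb C G \subseteq \ker \rho \cap \mathbb C G$.
   Context: $C^*(G)$ is the full group C*-algebra and $\mathbb C G\subset C^*(G)$ the group algebra. A one-dimensional representation is a homomorphism to the unit circle. $\tilde\lambda: G\to\mathbb C$ is $\lambda$ on $C$ and $0$ off $C$; it is positive definite and extends to a state on $C^*(G)$, and $\Lambda_{\tilde\lambda}$ is the associated GNS representation of $C^*(G)$. *)

theory Defs
  imports "HOL-Analysis.Analysis" "HOL-Algebra.Group"
begin

definition group_alg :: "('g, 'b) monoid_scheme \<Rightarrow> ('g \<Rightarrow> complex) set" where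
  "group_alg G = {a. finite {g. a g \<noteq> 0} \<and> {g. a g \<noteq> 0} \<subseteq> carrier G}"

definition ga_mult :: "('g, 'b) monoid_scheme \<Rightarrow> ('g \<Rightarrow> complex) \<Rightarrow> ('g \<Rightarrow> complex) \<Rightarrow> ('g \<Rightarrow> complex)" where
  "ga_mult G a b = (\<lambda>g. if g \<in> carrier G
      then (\<Sum>h\<in>{h. a h \<noteq> 0}. a h * b (inv\<^bsub>G\<^esub> h \<otimes>\<^bsub>G\<^esub> g)) else 0)"

definition ga_star :: "('g, 'b) monoid_scheme \<Rightarrow> ('g \<Rightarrow> complex) \<Rightarrow> ('g \<Rightarrow> complex)" where
  "ga_star G a = (\<lambda>g. if g \<in> carrier G then cnj (a (inv\<^bsub>G\<^esub> g)) else 0)"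

definition ga_delta :: "'g \<Rightarrow> ('g \<Rightarrow> complex)" where
  "ga_delta g = (\<lambda>h. if h = g then 1 else 0)"

definition one_dim_rep :: "('g, 'b) monoid_scheme \<Rightarrow> 'g set \<Rightarrow> ('g \<Rightarrow> complex) \<Rightarrow> bool" where
  "one_dim_rep G C lam \<longleftrightarrow>
     (\<forall>c\<in>C. \<forall>d\<in>C. lam (c \<otimes>\<^bsub>G\<^esub> d) = lam c * lam d) \<and> (\<forall>c\<in>C. cmod (lam c) = 1)"

definition lam_tilde :: "'g set \<Rightarrow> ('g \<Rightarrow> complex) \<Rightarrow> 'g \<Rightarrow> complex" where
  "lam_tilde C lam g = (if g \<in> C then lam g else 0)"

definition tilde_state :: "'g set \<Rightarrow> ('g \<Rightarrow> complex) \<Rightarrow> ('g \<Rightarrow> complex) \<Rightarrow> complex" where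
  "tilde_state C lam a = (\<Sum>g\<in>{g. a g \<noteq> 0}. a g * lam_tilde C lam g)"

text \<open>ker of the GNS representation intersected with CG: Lambda(a)[x] = [a x] on the dense
  image of CG in the GNS space, with norm squared phi((a x)^* (a x)).\<close>
definition gns_kernel_CG :: "('g, 'b) monoid_scheme \<Rightarrow> 'g set \<Rightarrow> ('g \<Rightarrow> complex) \<Rightarrow> ('g \<Rightarrow> complex) set" where
  "gns_kernel_CG G C lam = {a \<in> group_alg G. \<forall>x\<in>group_alg G.
      tilde_state C lam (ga_mult G (ga_star G (ga_mult G a x)) (ga_mult G a x)) = 0}"

definition cnorm :: "('h \<Rightarrow> 'h \<Rightarrow> complex) \<Rightarrow> 'h \<Rightarrow> real" where
  "cnorm ip x = sqrt (Re (ip x x))"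

definition complex_hilbert :: "(complex \<Rightarrow> 'h::ab_group_add \<Rightarrow> 'h) \<Rightarrow> ('h \<Rightarrow> 'h \<Rightarrow> complex) \<Rightarrow> bool" where
  "complex_hilbert sc ip \<longleftrightarrow>
     (\<forall>a x y. sc a (x + y) = sc a x + sc a y) \<and>
     (\<forall>a b x. sc (a + b) x = sc a x + sc b x) \<and>
     (\<forall>a b x. sc (a * b) x = sc a (sc b x)) \<and>
     (\<forall>x. sc 1 x = x) \<and>
     (\<forall>x y z. ip (x + y) z = ip x z + ip y z) \<and>
     (\<forall>a x y. ip (sc a x) y = a * ip x y) \<and>
     (\<forall>x y. ip y x = cnj (ip x y)) \<and>
     (\<forall>x. Re (ip x x) \<ge> 0) \<and>
     (\<forall>x. ip x x = 0 \<longrightarrow> x = 0) \<and>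
     (\<forall>X :: nat \<Rightarrow> 'h. (\<forall>e>0. \<exists>N. \<forall>m\<ge>N. \<forall>n\<ge>N. cnorm ip (X m - X n) < e) \<longrightarrow>
        (\<exists>L. \<forall>e>0. \<exists>N. \<forall>n\<ge>N. cnorm ip (X n - L) < e))"

definition bounded_op :: "(complex \<Rightarrow> 'h::ab_group_add \<Rightarrow> 'h) \<Rightarrow> ('h \<Rightarrow> 'h \<Rightarrow> complex) \<Rightarrow> ('h \<Rightarrow> 'h) \<Rightarrow> bool" where
  "bounded_op sc ip T \<longleftrightarrow>
     (\<forall>x y. T (x + y) = T x + T y) \<and> (\<forall>a x. T (sc a x) = sc a (T x)) \<and>
     (\<exists>K. \<forall>x. cnorm ip (T x) \<le> K * cnorm ip x)"

text \<open>A *-representation of CG by bounded operators (equivalently, the restriction to CG of a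
  *-representation of the full group C*-algebra C*(G)).\<close>
definition star_rep_CG :: "('g, 'b) monoid_scheme \<Rightarrow> (complex \<Rightarrow> 'h::ab_group_add \<Rightarrow> 'h) \<Rightarrow>
    ('h \<Rightarrow> 'h \<Rightarrow> complex) \<Rightarrow> (('g \<Rightarrow> complex) \<Rightarrow> 'h \<Rightarrow> 'h) \<Rightarrow> bool" where
  "star_rep_CG G sc ip rho \<longleftrightarrow>
     (\<forall>a\<in>group_alg G. bounded_op sc ip (rho a)) \<and>
     (\<forall>a\<in>group_alg G. \<forall>b\<in>group_alg G. rho (\<lambda>g. a g + b g) = (\<lambda>x. rho a x + rho b x)) \<and>
     (\<forall>a\<in>group_alg G. \<forall>c. rho (\<lambda>g. c * a g) = (\<lambda>x. sc c (rho a x))) \<and>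
     (\<forall>a\<in>group_alg G. \<forall>b\<in>group_alg G. rho (ga_mult G a b) = rho a \<circ> rho b) \<and>
     (\<forall>a\<in>group_alg G. \<forall>x y. ip (rho a x) y = ip x (rho (ga_star G a) y))"

end

theory Submission
  imports Defs "HOL-Algebra.Left_Coset"
begin

text \<open>
  For \<open>a\<close> in the group algebra, \<open>\<phi>(a* a) = \<Sum>k,m. conj (a k) a m \<lambda>~(k\<inverse> m)\<close>, and
  \<open>\<lambda>~(k\<inverse> m)\<close> vanishes unless \<open>k\<close> and \<open>m\<close> lie in the same left coset \<open>tC\<close>, where it
  equals \<open>conj (\<lambda>(t\<inverse> k)) \<lambda>(t\<inverse> m)\<close>. Fixing a representative \<open>t\<close> of each coset and putting
  \<open>P t = \<Sum>m\<in>tC. a m \<lambda>(t\<inverse> m)\<close>, this gives \<open>\<phi>(a* a) = \<Sum>t. |P t|\<^sup>2\<close>. On the other hand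
  \<open>\<rho>(\<delta> m) = \<lambda>(t\<inverse> m) \<rho>(\<delta> t)\<close> for \<open>m \<in> tC\<close>, so \<open>\<rho>(a) = \<Sum>t. P t \<rho>(\<delta> t)\<close>. For \<open>a\<close> in
  the GNS kernel \<open>\<phi>(a* a) = 0\<close>, so every \<open>P t\<close> vanishes and \<open>\<rho>(a) = 0\<close>.
\<close>

lemma group_algI:
  "finite F \<Longrightarrow> F \<subseteq> carrier G \<Longrightarrow> (\<And>g. g \<notin> F \<Longrightarrow> a g = 0) \<Longrightarrow> a \<in> group_alg G"
  unfolding group_alg_def by (auto intro: finite_subset)

lemma group_alg_finite_support: "a \<in> group_alg G \<Longrightarrow> finite {g. a g \<noteq> 0}"
  by (simp add: group_alg_def)

lemma group_alg_support_subset: "a \<in> group_alg G \<Longrightarrow> {g. a g \<noteq> 0} \<subseteq> carrier G"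
  by (simp add: group_alg_def)

lemma ga_delta_in_group_alg: "g \<in> carrier G \<Longrightarrow> ga_delta g \<in> group_alg G"
  by (rule group_algI[of "{g}"]) (auto simp: ga_delta_def)

lemma zero_in_group_alg: "(\<lambda>g. 0) \<in> group_alg G"
  by (rule group_algI[of "{}"]) auto

lemma finite_support_eq_sum_delta:
  assumes "finite {g. a g \<noteq> 0}"
  shows "a = (\<lambda>g. \<Sum>m | a m \<noteq> 0. a m * ga_delta m g)"
proof
  fix g
  have "(\<Sum>m | a m \<noteq> 0. a m * ga_delta m g) = (\<Sum>m | a m \<noteq> 0. if g = m then a g else 0)"
    by (intro sum.cong) (auto simp: ga_delta_def)
  also have "\<dots> = a g"
    using assms by simp
  finally show "a g = (\<Sum>m | a m \<noteq> 0. a m * ga_delta m g)" ..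
qed

context group
begin

lemma ga_mult_delta_delta:
  assumes "t \<in> carrier G" and "c \<in> carrier G"
  shows "ga_mult G (ga_delta t) (ga_delta c) = ga_delta (t \<otimes> c)"
proof
  fix g
  have "{h. ga_delta t h \<noteq> 0} = {t}"
    by (auto simp: ga_delta_def)
  then show "ga_mult G (ga_delta t) (ga_delta c) g = ga_delta (t \<otimes> c) g"
    using assms by (auto simp: ga_mult_def ga_delta_def inv_solve_left')
qed

lemma ga_mult_delta_one:
  assumes a: "a \<in> group_alg G"
  shows "ga_mult G a (ga_delta \<one>) = a"
proof
  fix g
  have supp: "{h. a h \<noteq> 0} \<subseteq> carrier G"
    using a by (rule group_alg_support_subset)
  show "ga_mult G a (ga_delta \<one>) g = a g"
  proof (cases "g \<in> carrier G")
    case True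
    have "inv h \<otimes> g = \<one> \<longleftrightarrow> h = g" if "h \<in> carrier G" for h
      using True that by (metis inv_equality inv_inv inv_closed r_inv)
    then have "ga_mult G a (ga_delta \<one>) g = (\<Sum>h | a h \<noteq> 0. if h = g then a h else 0)"
      unfolding ga_mult_def ga_delta_def using True supp by (auto intro!: sum.cong)
    also have "\<dots> = a g"
      using group_alg_finite_support[OF a] by simp
    finally show ?thesis .
  next
    case False
    then show ?thesis
      using supp by (auto simp: ga_mult_def)
  qed
qed

lemma ga_star_support:
  assumes a: "a \<in> group_alg G"
  shows "{h. ga_star G a h \<noteq> 0} = m_inv G ` {k. a k \<noteq> 0}"
proof (intro equalityI subsetI)
  fix h assume "h \<in> {h. ga_star G a h \<noteq> 0}"
  then have "h \<in> carrier G" and "a (inv h) \<noteq> 0"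
    by (auto simp: ga_star_def split: if_splits)
  then show "h \<in> m_inv G ` {k. a k \<noteq> 0}"
    by (intro image_eqI[of _ _ "inv h"]) auto
next
  fix h assume "h \<in> m_inv G ` {k. a k \<noteq> 0}"
  then show "h \<in> {h. ga_star G a h \<noteq> 0}"
    using group_alg_support_subset[OF a] by (auto simp: ga_star_def)
qed

lemma ga_star_in_group_alg:
  assumes a: "a \<in> group_alg G"
  shows "ga_star G a \<in> group_alg G"
proof (rule group_algI)
  show "finite (m_inv G ` {k. a k \<noteq> 0})"
    using group_alg_finite_support[OF a] by simp
  show "m_inv G ` {k. a k \<noteq> 0} \<subseteq> carrier G"
    using group_alg_support_subset[OF a] by auto
  show "ga_star G a g = 0" if "g \<notin> m_inv G ` {k. a k \<noteq> 0}" for g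
    using that ga_star_support[OF a] by blast
qed

lemma sum_left_translate:
  fixes a f :: "'a \<Rightarrow> 'c::comm_semiring_0"
  assumes h: "h \<in> carrier G" and S: "finite S" "S \<subseteq> carrier G"
    and supp: "{m. a m \<noteq> 0} \<subseteq> carrier G" "(\<lambda>m. h \<otimes> m) ` {m. a m \<noteq> 0} \<subseteq> S"
  shows "(\<Sum>g\<in>S. a (inv h \<otimes> g) * f g) = (\<Sum>m | a m \<noteq> 0. a m * f (h \<otimes> m))"
proof -
  let ?A = "{m. a m \<noteq> 0}"
  have inj: "inj_on (\<lambda>m. h \<otimes> m) ?A"
    using h supp(1) by (intro inj_onI) (metis Units_eq Units_l_cancel mem_Collect_eq subsetD)
  have "(\<Sum>m\<in>?A. a m * f (h \<otimes> m)) = (\<Sum>m\<in>?A. a (inv h \<otimes> (h \<otimes> m)) * f (h \<otimes> m))"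
    using h supp(1) by (intro sum.cong) (auto simp: m_assoc[symmetric])
  also have "\<dots> = (\<Sum>g\<in>(\<lambda>m. h \<otimes> m) ` ?A. a (inv h \<otimes> g) * f g)"
    by (simp add: sum.reindex[OF inj])
  also have "\<dots> = (\<Sum>g\<in>S. a (inv h \<otimes> g) * f g)"
  proof (rule sum.mono_neutral_left[OF S(1) supp(2)], safe)
    fix g assume g: "g \<in> S" "g \<notin> (\<lambda>m. h \<otimes> m) ` ?A"
    have "g = h \<otimes> (inv h \<otimes> g)"
      using h g S(2) by (auto simp: m_assoc[symmetric])
    then have "a (inv h \<otimes> g) = 0"
      using g(2) by (metis (mono_tags, lifting) image_eqI mem_Collect_eq)
    then show "a (inv h \<otimes> g) * f g = 0"
      by simp
  qed
  finally show ?thesis ..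
qed

lemma tilde_state_ga_mult:
  assumes b: "b \<in> group_alg G" and a: "a \<in> group_alg G"
  shows "tilde_state C lam (ga_mult G b a) =
    (\<Sum>h | b h \<noteq> 0. \<Sum>m | a m \<noteq> 0. b h * a m * lam_tilde C lam (h \<otimes> m))"
proof -
  let ?B = "{h. b h \<noteq> 0}" and ?A = "{m. a m \<noteq> 0}" and ?lt = "lam_tilde C lam"
  define S where "S = (\<lambda>(h, m). h \<otimes> m) ` (?B \<times> ?A)"
  have B: "finite ?B" "?B \<subseteq> carrier G" and A: "finite ?A" "?A \<subseteq> carrier G"
    using a b by (simp_all add: group_alg_finite_support group_alg_support_subset)
  have S: "finite S" "S \<subseteq> carrier G"
    using A B by (auto simp: S_def)
  have supp_S: "{g. ga_mult G b a g \<noteq> 0} \<subseteq> S"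
  proof
    fix g assume "g \<in> {g. ga_mult G b a g \<noteq> 0}"
    then have g: "g \<in> carrier G" and nz: "(\<Sum>h\<in>?B. b h * a (inv h \<otimes> g)) \<noteq> 0"
      by (auto simp: ga_mult_def split: if_splits)
    obtain h where "h \<in> ?B" and "b h * a (inv h \<otimes> g) \<noteq> 0"
      using nz by (rule sum.not_neutral_contains_not_neutral)
    then have h: "h \<in> ?B" "a (inv h \<otimes> g) \<noteq> 0"
      by simp_all
    moreover have "g = h \<otimes> (inv h \<otimes> g)"
      using g h B(2) by (auto simp: m_assoc[symmetric])
    ultimately show "g \<in> S"
      unfolding S_def by (auto intro!: image_eqI[where x = "(h, inv h \<otimes> g)"])
  qed
  have "tilde_state C lam (ga_mult G b a) = (\<Sum>g\<in>S. ga_mult G b a g * ?lt g)"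
    unfolding tilde_state_def using supp_S S(1) by (intro sum.mono_neutral_left) auto
  also have "\<dots> = (\<Sum>g\<in>S. \<Sum>h\<in>?B. b h * (a (inv h \<otimes> g) * ?lt g))"
    using S(2) by (intro sum.cong) (auto simp: ga_mult_def sum_distrib_right mult.assoc)
  also have "\<dots> = (\<Sum>h\<in>?B. b h * (\<Sum>g\<in>S. a (inv h \<otimes> g) * ?lt g))"
    by (subst sum.swap) (simp add: sum_distrib_left)
  also have "\<dots> = (\<Sum>h\<in>?B. b h * (\<Sum>m\<in>?A. a m * ?lt (h \<otimes> m)))"
  proof (rule sum.cong[OF refl])
    fix h assume h: "h \<in> ?B"
    then have "(\<lambda>m. h \<otimes> m) ` ?A \<subseteq> S"
      unfolding S_def by auto
    then show "b h * (\<Sum>g\<in>S. a (inv h \<otimes> g) * ?lt g) = b h * (\<Sum>m\<in>?A. a m * ?lt (h \<otimes> m))"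
      using h B(2) A(2) S by (simp add: sum_left_translate subsetD)
  qed
  finally show ?thesis
    by (simp add: sum_distrib_left mult.assoc)
qed

lemma tilde_state_star_mult:
  assumes a: "a \<in> group_alg G"
  shows "tilde_state C lam (ga_mult G (ga_star G a) a) =
    (\<Sum>k | a k \<noteq> 0. \<Sum>m | a m \<noteq> 0. cnj (a k) * a m * lam_tilde C lam (inv k \<otimes> m))"
proof -
  have inj: "inj_on (m_inv G) {k. a k \<noteq> 0}"
    using inv_inj group_alg_support_subset[OF a] by (rule inj_on_subset)
  show ?thesis
    unfolding tilde_state_ga_mult[OF ga_star_in_group_alg[OF a] a] ga_star_support[OF a]
      sum.reindex[OF inj]
    using group_alg_support_subset[OF a] by (intro sum.cong) (auto simp: ga_star_def)
qed

lemma gns_kernel_CG_tilde_state_zero: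
  assumes "a \<in> gns_kernel_CG G C lam"
  shows "tilde_state C lam (ga_mult G (ga_star G a) a) = 0"
proof -
  have a: "a \<in> group_alg G"
    using assms by (simp add: gns_kernel_CG_def)
  have "tilde_state C lam (ga_mult G (ga_star G (ga_mult G a (ga_delta \<one>)))
      (ga_mult G a (ga_delta \<one>))) = 0"
    using assms ga_delta_in_group_alg[OF one_closed] unfolding gns_kernel_CG_def by blast
  then show ?thesis
    by (simp add: ga_mult_delta_one[OF a])
qed

lemma one_dim_rep_inv_mult:
  assumes "subgroup C G" and lam: "one_dim_rep G C lam" and c: "c \<in> C" and d: "d \<in> C"
  shows "lam (inv c \<otimes> d) = cnj (lam c) * lam d"
proof -
  interpret C: subgroup C G by fact
  have cd: "inv c \<otimes> d \<in> C"
    using c d by simp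
  have "lam d = lam (c \<otimes> (inv c \<otimes> d))"
    using c d by (simp add: m_assoc[symmetric])
  also have "\<dots> = lam c * lam (inv c \<otimes> d)"
    using lam c cd by (simp add: one_dim_rep_def)
  finally have "cnj (lam c) * lam d = cnj (lam c) * lam c * lam (inv c \<otimes> d)"
    by (simp add: mult.assoc)
  moreover have "cnj (lam c) * lam c = 1"
    using lam c by (simp add: one_dim_rep_def complex_norm_square[symmetric] mult.commute)
  ultimately show ?thesis
    by simp
qed

end

definition coset_rep :: "('g, 'b) monoid_scheme \<Rightarrow> 'g set \<Rightarrow> 'g \<Rightarrow> 'g" where
  "coset_rep G C g = (SOME t. t \<in> g <#\<^bsub>G\<^esub> C)"

context group
begin

lemma coset_rep_in_l_coset:
  assumes "subgroup C G" and "g \<in> carrier G"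
  shows "coset_rep G C g \<in> g <# C"
  unfolding coset_rep_def using lcos_self[OF assms(2,1)] by (rule someI)

lemma coset_rep_closed:
  assumes "subgroup C G" and "g \<in> carrier G"
  shows "coset_rep G C g \<in> carrier G"
  using l_coset_carrier[OF coset_rep_in_l_coset[OF assms] assms(2,1)] .

lemma inv_coset_rep_mult_mem:
  assumes C: "subgroup C G" and g: "g \<in> carrier G"
  shows "inv (coset_rep G C g) \<otimes> g \<in> C"
proof -
  have "g \<in> coset_rep G C g <# C"
    using l_coset_swap[OF coset_rep_in_l_coset[OF C g] g C] .
  then show ?thesis
    using subgroup.lcos_module_imp[OF C is_group coset_rep_closed[OF C g]] by blast
qed

lemma coset_rep_eq_iff:
  assumes C: "subgroup C G" and k: "k \<in> carrier G" and m: "m \<in> carrier G"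
  shows "coset_rep G C k = coset_rep G C m \<longleftrightarrow> inv k \<otimes> m \<in> C"
proof
  assume eq: "coset_rep G C k = coset_rep G C m"
  have "k <# C = coset_rep G C k <# C"
    using l_repr_independence[OF coset_rep_in_l_coset[OF C k] k C] .
  also have "\<dots> = m <# C"
    using l_repr_independence[OF coset_rep_in_l_coset[OF C m] m C] eq by simp
  finally have "m \<in> k <# C"
    using lcos_self[OF m C] by simp
  then show "inv k \<otimes> m \<in> C"
    using subgroup.lcos_module_imp[OF C is_group k] by blast
next
  assume "inv k \<otimes> m \<in> C"
  then have "m \<in> k <# C"
    using subgroup.lcos_module_rev[OF C is_group k m] by blast
  then have "k <# C = m <# C"
    using l_repr_independence[OF _ k C] by blast
  then show "coset_rep G C k = coset_rep G C m"
    by (simp add: coset_rep_def)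
qed

end

text \<open>The coefficient \<open>P t\<close> above; it is \<open>0\<close> unless \<open>t\<close> is one of the chosen representatives.\<close>
definition coset_sum ::
    "('g, 'b) monoid_scheme \<Rightarrow> 'g set \<Rightarrow> ('g \<Rightarrow> complex) \<Rightarrow> ('g \<Rightarrow> complex) \<Rightarrow> 'g \<Rightarrow> complex" where
  "coset_sum G C lam a t = (\<Sum>m | a m \<noteq> 0 \<and> coset_rep G C m = t. a m * lam (inv\<^bsub>G\<^esub> t \<otimes>\<^bsub>G\<^esub> m))"

lemma sum_sum_same_class_eq_sum_norm_square:
  fixes \<mu> :: "'a \<Rightarrow> complex" and r :: "'a \<Rightarrow> 'b"
  assumes A: "finite A"
  shows "(\<Sum>k\<in>A. \<Sum>m\<in>A. if r k = r m then cnj (\<mu> k) * \<mu> m else 0) =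
    of_real (\<Sum>t\<in>r ` A. (cmod (\<Sum>m | m \<in> A \<and> r m = t. \<mu> m))\<^sup>2)"
proof -
  let ?P = "\<lambda>t. \<Sum>m | m \<in> A \<and> r m = t. \<mu> m"
  have row: "(\<Sum>m\<in>A. if r k = r m then cnj (\<mu> k) * \<mu> m else 0) = cnj (\<mu> k) * ?P (r k)" for k
  proof -
    have "cnj (\<mu> k) * ?P (r k) = (\<Sum>m | m \<in> A \<and> r m = r k. cnj (\<mu> k) * \<mu> m)"
      by (simp add: sum_distrib_left)
    also have "\<dots> = (\<Sum>m\<in>A. if r m = r k then cnj (\<mu> k) * \<mu> m else 0)"
      using A by (rule sum.inter_filter)
    also have "\<dots> = (\<Sum>m\<in>A. if r k = r m then cnj (\<mu> k) * \<mu> m else 0)"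
      by (rule sum.cong) auto
    finally show ?thesis ..
  qed
  have "(\<Sum>k\<in>A. \<Sum>m\<in>A. if r k = r m then cnj (\<mu> k) * \<mu> m else 0) =
      (\<Sum>k\<in>A. cnj (\<mu> k) * ?P (r k))"
    by (simp only: row)
  also have "\<dots> = (\<Sum>t\<in>r ` A. \<Sum>k | k \<in> A \<and> r k = t. cnj (\<mu> k) * ?P (r k))"
    using A by (intro sum.group[symmetric]) auto
  also have "\<dots> = (\<Sum>t\<in>r ` A. \<Sum>k | k \<in> A \<and> r k = t. cnj (\<mu> k) * ?P t)"
    by (intro sum.cong refl) auto
  also have "\<dots> = (\<Sum>t\<in>r ` A. cnj (?P t) * ?P t)"
    by (simp add: sum_distrib_right)
  also have "\<dots> = of_real (\<Sum>t\<in>r ` A. (cmod (?P t))\<^sup>2)"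
    by (simp only: of_real_sum complex_norm_square mult.commute)
  finally show ?thesis .
qed

context group
begin

lemma tilde_state_star_mult_eq_coset_sums:
  assumes C: "subgroup C G" and lam: "one_dim_rep G C lam" and a: "a \<in> group_alg G"
  shows "tilde_state C lam (ga_mult G (ga_star G a) a) =
    of_real (\<Sum>t\<in>coset_rep G C ` {m. a m \<noteq> 0}. (cmod (coset_sum G C lam a t))\<^sup>2)"
proof -
  let ?A = "{m. a m \<noteq> 0}" and ?r = "coset_rep G C"
  define \<mu> where "\<mu> m = a m * lam (inv (?r m) \<otimes> m)" for m
  have A: "finite ?A" "?A \<subseteq> carrier G"
    using a by (simp_all add: group_alg_finite_support group_alg_support_subset)
  have entry: "cnj (a k) * a m * lam_tilde C lam (inv k \<otimes> m) =
      (if ?r k = ?r m then cnj (\<mu> k) * \<mu> m else 0)"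
    if k: "k \<in> carrier G" and m: "m \<in> carrier G" for k m
  proof (cases "?r k = ?r m")
    case True
    define t where "t = ?r k"
    have t: "t \<in> carrier G"
      unfolding t_def using C k by (rule coset_rep_closed)
    have "t \<otimes> (inv t \<otimes> m) = m"
      using t m by (simp add: m_assoc[symmetric])
    then have "lam (inv k \<otimes> m) = lam (inv (inv t \<otimes> k) \<otimes> (inv t \<otimes> m))"
      using k m t by (simp add: inv_mult_group m_assoc)
    also have "\<dots> = cnj (lam (inv t \<otimes> k)) * lam (inv t \<otimes> m)"
      using C lam inv_coset_rep_mult_mem[OF C k] inv_coset_rep_mult_mem[OF C m] True
      by (intro one_dim_rep_inv_mult) (simp_all add: t_def)
    finally show ?thesis
      using True coset_rep_eq_iff[OF C k m] by (simp add: lam_tilde_def \<mu>_def t_def)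
  next
    case False
    then show ?thesis
      using coset_rep_eq_iff[OF C k m] by (simp add: lam_tilde_def)
  qed
  have "tilde_state C lam (ga_mult G (ga_star G a) a) =
      (\<Sum>k\<in>?A. \<Sum>m\<in>?A. if ?r k = ?r m then cnj (\<mu> k) * \<mu> m else 0)"
    unfolding tilde_state_star_mult[OF a] by (intro sum.cong refl entry) (use A(2) in auto)
  also have "\<dots> = of_real (\<Sum>t\<in>?r ` ?A. (cmod (\<Sum>m | m \<in> ?A \<and> ?r m = t. \<mu> m))\<^sup>2)"
    using A(1) by (rule sum_sum_same_class_eq_sum_norm_square)
  also have "\<dots> = of_real (\<Sum>t\<in>?r ` ?A. (cmod (coset_sum G C lam a t))\<^sup>2)"
    unfolding coset_sum_def \<mu>_def by (intro arg_cong[where f = of_real] sum.cong refl) auto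
  finally show ?thesis .
qed

end

lemma sc_zero_left:
  fixes sc :: "complex \<Rightarrow> 'h::ab_group_add \<Rightarrow> 'h"
  assumes "\<forall>a b x. sc (a + b) x = sc a x + sc b x"
  shows "sc 0 x = 0"
proof -
  have "sc (0 + 0) x = sc 0 x + sc 0 x"
    using assms by blast
  then show ?thesis
    by simp
qed

lemma sc_sum_left:
  fixes sc :: "complex \<Rightarrow> 'h::ab_group_add \<Rightarrow> 'h"
  assumes add: "\<forall>a b x. sc (a + b) x = sc a x + sc b x" and "finite F"
  shows "sc (\<Sum>m\<in>F. f m) x = (\<Sum>m\<in>F. sc (f m) x)"
  using assms(2) by (induction F rule: finite_induct) (simp_all add: sc_zero_left[OF add] add)

lemma star_rep_CG_zero:
  assumes "star_rep_CG G sc ip rho"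
  shows "rho (\<lambda>g. 0) x = 0"
proof -
  have add: "\<forall>a\<in>group_alg G. \<forall>b\<in>group_alg G. rho (\<lambda>g. a g + b g) = (\<lambda>x. rho a x + rho b x)"
    using assms by (simp add: star_rep_CG_def)
  have "rho (\<lambda>g. 0) x = rho (\<lambda>g. 0) x + rho (\<lambda>g. 0) x"
    using fun_cong[OF add[rule_format, OF zero_in_group_alg zero_in_group_alg], of x] by simp
  then show ?thesis
    by simp
qed

lemma star_rep_CG_sum_delta:
  assumes rep: "star_rep_CG G sc ip rho" and "finite F" and "F \<subseteq> carrier G"
  shows "rho (\<lambda>g. \<Sum>m\<in>F. c m * ga_delta m g) x = (\<Sum>m\<in>F. sc (c m) (rho (ga_delta m) x))"
  using assms(2,3)
proof (induction F rule: finite_induct)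
  case empty
  then show ?case
    using star_rep_CG_zero[OF rep] by simp
next
  case (insert t F)
  have t: "t \<in> carrier G" and F: "F \<subseteq> carrier G"
    using insert.prems by auto
  have add: "\<forall>a\<in>group_alg G. \<forall>b\<in>group_alg G. rho (\<lambda>g. a g + b g) = (\<lambda>x. rho a x + rho b x)"
    and scale: "\<forall>a\<in>group_alg G. \<forall>c. rho (\<lambda>g. c * a g) = (\<lambda>x. sc c (rho a x))"
    using rep by (simp_all add: star_rep_CG_def)
  have term_t: "(\<lambda>g. c t * ga_delta t g) \<in> group_alg G"
    by (rule group_algI[of "{t}"]) (use t in \<open>auto simp: ga_delta_def\<close>)
  have terms_F: "(\<lambda>g. \<Sum>m\<in>F. c m * ga_delta m g) \<in> group_alg G"
    by (rule group_algI[OF insert.hyps(1) F]) (auto simp: ga_delta_def intro!: sum.neutral)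
  show ?case
    using add[rule_format, OF term_t terms_F] scale[rule_format, OF ga_delta_in_group_alg[OF t]]
      insert by simp
qed

context group
begin

lemma star_rep_CG_delta_mult_subgroup:
  assumes rep: "star_rep_CG G sc ip rho" and C: "subgroup C G"
    and onC: "\<forall>c\<in>C. rho (ga_delta c) = (\<lambda>x. sc (lam c) x)"
    and t: "t \<in> carrier G" and c: "c \<in> C"
  shows "rho (ga_delta (t \<otimes> c)) x = sc (lam c) (rho (ga_delta t) x)"
proof -
  have c_carrier: "c \<in> carrier G"
    using C c by (rule subgroup.mem_carrier)
  have "rho (ga_delta (t \<otimes> c)) = rho (ga_delta t) \<circ> rho (ga_delta c)"
    using rep ga_delta_in_group_alg[OF t] ga_delta_in_group_alg[OF c_carrier]
    by (simp add: star_rep_CG_def ga_mult_delta_delta[OF t c_carrier, symmetric])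
  moreover have "rho (ga_delta t) (sc (lam c) x) = sc (lam c) (rho (ga_delta t) x)"
    using rep ga_delta_in_group_alg[OF t] by (simp add: star_rep_CG_def bounded_op_def)
  ultimately show ?thesis
    using onC c by simp
qed

lemma star_rep_CG_eq_coset_sums:
  fixes sc :: "complex \<Rightarrow> 'h::ab_group_add \<Rightarrow> 'h"
  assumes add: "\<forall>a b x. sc (a + b) x = sc a x + sc b x"
    and mult: "\<forall>a b x. sc (a * b) x = sc a (sc b x)"
    and rep: "star_rep_CG G sc ip rho" and C: "subgroup C G"
    and onC: "\<forall>c\<in>C. rho (ga_delta c) = (\<lambda>x. sc (lam c) x)"
    and a: "a \<in> group_alg G"
  shows "rho a x =
    (\<Sum>t\<in>coset_rep G C ` {m. a m \<noteq> 0}. sc (coset_sum G C lam a t) (rho (ga_delta t) x))"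
proof -
  let ?A = "{m. a m \<noteq> 0}" and ?r = "coset_rep G C"
  have A: "finite ?A" "?A \<subseteq> carrier G"
    using a by (simp_all add: group_alg_finite_support group_alg_support_subset)
  have delta: "rho (ga_delta m) x = sc (lam (inv (?r m) \<otimes> m)) (rho (ga_delta (?r m)) x)"
    if m: "m \<in> carrier G" for m
  proof -
    have "?r m \<otimes> (inv (?r m) \<otimes> m) = m"
      using coset_rep_closed[OF C m] m by (simp add: m_assoc[symmetric])
    then show ?thesis
      using star_rep_CG_delta_mult_subgroup[OF rep C onC coset_rep_closed[OF C m]
          inv_coset_rep_mult_mem[OF C m]]
      by simp
  qed
  have "rho a x = rho (\<lambda>g. \<Sum>m\<in>?A. a m * ga_delta m g) x"
    using finite_support_eq_sum_delta[OF A(1)] by (rule arg_cong[where f = "\<lambda>b. rho b x"])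
  also have "\<dots> = (\<Sum>m\<in>?A. sc (a m) (rho (ga_delta m) x))"
    by (rule star_rep_CG_sum_delta[OF rep A])
  also have "\<dots> = (\<Sum>m\<in>?A. sc (a m * lam (inv (?r m) \<otimes> m)) (rho (ga_delta (?r m)) x))"
  proof (rule sum.cong[OF refl])
    fix m assume "m \<in> ?A"
    then have "m \<in> carrier G"
      using A(2) by blast
    then show "sc (a m) (rho (ga_delta m) x) =
        sc (a m * lam (inv (?r m) \<otimes> m)) (rho (ga_delta (?r m)) x)"
      by (simp only: delta mult)
  qed
  also have "\<dots> = (\<Sum>t\<in>?r ` ?A. \<Sum>m | m \<in> ?A \<and> ?r m = t.
      sc (a m * lam (inv (?r m) \<otimes> m)) (rho (ga_delta (?r m)) x))"
    using A(1) by (intro sum.group[symmetric]) auto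
  also have "\<dots> = (\<Sum>t\<in>?r ` ?A. sc (coset_sum G C lam a t) (rho (ga_delta t) x))"
  proof (rule sum.cong[OF refl])
    fix t
    have fin: "finite {m. a m \<noteq> 0 \<and> ?r m = t}"
      using A(1) by simp
    have "(\<Sum>m | m \<in> ?A \<and> ?r m = t.
        sc (a m * lam (inv (?r m) \<otimes> m)) (rho (ga_delta (?r m)) x)) =
        (\<Sum>m | a m \<noteq> 0 \<and> ?r m = t. sc (a m * lam (inv t \<otimes> m)) (rho (ga_delta t) x))"
      by (rule sum.cong) auto
    also have "\<dots> = sc (coset_sum G C lam a t) (rho (ga_delta t) x)"
      unfolding coset_sum_def using fin by (rule sc_sum_left[OF add, symmetric])
    finally show "(\<Sum>m | m \<in> ?A \<and> ?r m = t.
        sc (a m * lam (inv (?r m) \<otimes> m)) (rho (ga_delta (?r m)) x)) =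
        sc (coset_sum G C lam a t) (rho (ga_delta t) x)" .
  qed
  finally show ?thesis .
qed

end

theorem proposition5p5:
  fixes G :: "('g, 'b) monoid_scheme" and C :: "'g set" and lam :: "'g \<Rightarrow> complex"
    and sc :: "complex \<Rightarrow> 'h::ab_group_add \<Rightarrow> 'h" and ip :: "'h \<Rightarrow> 'h \<Rightarrow> complex"
    and rho :: "('g \<Rightarrow> complex) \<Rightarrow> 'h \<Rightarrow> 'h"
  assumes "group G" and "countable (carrier G)" and "subgroup C G"
    and "one_dim_rep G C lam"
    and "complex_hilbert sc ip"
    and "star_rep_CG G sc ip rho"
    and "\<forall>c\<in>C. rho (ga_delta c) = (\<lambda>x. sc (lam c) x)"
  shows "gns_kernel_CG G C lam \<subseteq> {a \<in> group_alg G. rho a = (\<lambda>x. 0)}"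
proof
  \<comment> \<open>Countability of \<open>G\<close> only matters for \<open>C*(G)\<close> itself, not on the group algebra.\<close>
  fix a assume ker: "a \<in> gns_kernel_CG G C lam"
  interpret group G by fact
  have a: "a \<in> group_alg G"
    using ker by (simp add: gns_kernel_CG_def)
  have add: "\<forall>a b x. sc (a + b) x = sc a x + sc b x"
    and mult: "\<forall>a b x. sc (a * b) x = sc a (sc b x)"
    using \<open>complex_hilbert sc ip\<close> by (simp_all add: complex_hilbert_def)
  let ?T = "coset_rep G C ` {m. a m \<noteq> 0}"
  have "complex_of_real (\<Sum>t\<in>?T. (cmod (coset_sum G C lam a t))\<^sup>2) = 0"
    unfolding tilde_state_star_mult_eq_coset_sums[OF assms(3,4) a, symmetric]
    by (rule gns_kernel_CG_tilde_state_zero[OF ker])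
  then have "(\<Sum>t\<in>?T. (cmod (coset_sum G C lam a t))\<^sup>2) = 0"
    by (simp only: of_real_eq_0_iff)
  then have "coset_sum G C lam a t = 0" if "t \<in> ?T" for t
    using that group_alg_finite_support[OF a] by (auto simp: sum_nonneg_eq_0_iff)
  then have "rho a x = 0" for x
    by (simp add: star_rep_CG_eq_coset_sums[OF add mult assms(6,3,7) a] sc_zero_left[OF add])
  with a show "a \<in> {a \<in> group_alg G. rho a = (\<lambda>x. 0)}"
    by auto
qed

end
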